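(* Let $m\ge 2$ be an integer. If $m$ is not a power of $2$, then the $m$-element subsets of a $2m$-element set $X$ can be coloured Red and Blue so that (i) complementary $m$-sets (i.e. $A$ and $X\setminus A$) receive distinct colours, and (ii) every point of $X$ is contained in the same number of Red sets as Blue sets. If $m$ is a power of $2$, then there is a Red–Blue colouring of the $m$-subsets of $X$ satisfying (i) such that for $m/2$ of the points of $X$, the number of Red sets containing the point exceeds the number of Blue sets containing it by $3$, and for the remaining $3m/2$ points, the number of Blue sets containing the point exceeds the number of Red sets containing it by $1$. *)

theory Defs
  imports Main
begin

definition msubsets :: "'a set \<Rightarrow> nat \<Rightarrow> 'a set set" where
  "msubsets X m = {A. A \<subseteq> X \<and> card A = m}"

definition red_deg :: "('a set \<Rightarrow> bool) \<Rightarrow> 'a set \<Rightarrow> nat \<Rightarrow> 'a \<Rightarrow> nat" where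
  "red_deg red X m x = card {A \<in> msubsets X m. red A \<and> x \<in> A}"

definition blue_deg :: "('a set \<Rightarrow> bool) \<Rightarrow> 'a set \<Rightarrow> nat \<Rightarrow> 'a \<Rightarrow> nat" where
  "blue_deg red X m x = card {A \<in> msubsets X m. \<not> red A \<and> x \<in> A}"

definition complement_distinct :: "('a set \<Rightarrow> bool) \<Rightarrow> 'a set \<Rightarrow> nat \<Rightarrow> bool" where
  "complement_distinct red X m = (\<forall>A \<in> msubsets X m. red A \<noteq> red (X - A))"

end

theory Submission
  imports Defs
begin

(* In a colouring where complementary m-sets get distinct colours, exactly half of the
   binom(2m, m) sets are red, namely N = binom(2m-1, m-1), so the red degrees sum to m N.
   Complementation turns the red sets containing y but not x into the blue sets containing
   x but not y, so deg x + deg y is congruent mod 2 to the number binom(2m-2, m-1) of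
   m-sets containing x but not y, which is even: all red degrees have the same parity.
   If deg x > deg y, some red A containing x but not y has a blue swap B = A - x + y;
   recolouring A, B and their complements moves 2 units of red degree from x to y and
   fixes every other point.  Descending on the distance to the target, every target
   degree function with total m N, a common parity and spread at most 2 is attained.
   By Lucas' theorem N is even exactly when m is not a power of 2: then the target is
   N/2 everywhere; otherwise (N+3)/2 on m/2 points and (N-1)/2 elsewhere. *)

lemma parity_choose_double:
  "(odd ((2*a) choose (2*b)) \<longleftrightarrow> odd (a choose b)) \<and> even ((2*a) choose Suc (2*b))"
proof (induction a arbitrary: b)
  case 0
  show ?case by (cases b) auto
next
  case (Suc a)
  show ?case
  proof (cases b)
    case 0
    then show ?thesis by simp
  next
    case (Suc c)
    have pascal2: "Suc (Suc n) choose Suc (Suc k) = (n choose k) + 2 * (n choose Suc k) + (n choose Suc (Suc k))"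
      for n k :: nat by simp
    have "2 * Suc a = Suc (Suc (2 * a))" "2 * b = Suc (Suc (2 * c))" "Suc (2 * b) = Suc (Suc (Suc (2 * c)))"
      using Suc by simp_all
    then show ?thesis
      using pascal2[of "2 * a" "2 * c"] pascal2[of "2 * a" "Suc (2 * c)"]
        Suc.IH[of c] Suc.IH[of "Suc c"] Suc by simp
  qed
qed

lemma odd_choose_iff_div2:
  "odd (n choose k) \<longleftrightarrow> (odd n \<or> even k) \<and> odd ((n div 2) choose (k div 2))"
proof -
  obtain a where n: "n = 2 * a \<or> n = Suc (2 * a)" by (metis oddE evenE Suc_eq_plus1)
  obtain b where k: "k = 2 * b \<or> k = Suc (2 * b)" by (metis oddE evenE Suc_eq_plus1)
  have "odd (Suc (2 * a) choose k) \<longleftrightarrow> odd (a choose (k div 2))"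
  proof (cases "k = 0")
    case False
    then obtain j where "k = Suc j" by (cases k) auto
    then show ?thesis
      using k parity_choose_double[of a b] parity_choose_double[of a "b - 1"]
      by (cases b) auto
  qed simp
  then show ?thesis
    using n k parity_choose_double[of a b] by auto
qed

lemma central_binomial_eq_double: "k \<ge> 1 \<Longrightarrow> (2*k) choose k = 2 * ((2*k - 1) choose (k - 1))"
  using times_binomial_minus1_eq[of k "2*k"] by simp

lemma double_eq_power_of_two_iff: "(\<exists>k. 2 * a = (2::nat) ^ k) \<longleftrightarrow> (\<exists>k. a = (2::nat) ^ k)"
proof
  assume "\<exists>k. 2 * a = (2::nat) ^ k"
  then obtain k where "2 * a = (2::nat) ^ k" by blast
  then show "\<exists>k. a = (2::nat) ^ k" by (cases k) auto
next
  assume "\<exists>k. a = (2::nat) ^ k"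
  then show "\<exists>k. 2 * a = (2::nat) ^ k" by (metis power_Suc)
qed

lemma odd_choose_double_pred_iff:
  assumes "m \<ge> 1"
  shows "odd ((2*m - 1) choose (m - 1)) \<longleftrightarrow> (\<exists>k. m = 2 ^ k)"
  using assms
proof (induction m rule: less_induct)
  case (less m)
  have "odd (2*m - 1)" "(2*m - 1) div 2 = m - 1" using less.prems by presburger+
  then have "odd ((2*m - 1) choose (m - 1)) \<longleftrightarrow> odd ((m - 1) choose ((m - 1) div 2))"
    using odd_choose_iff_div2[of "2*m - 1" "m - 1"] by simp
  also have "\<dots> \<longleftrightarrow> (\<exists>k. m = 2 ^ k)"
  proof (cases "even m")
    case True
    then obtain a where a: "m = 2 * a" and "a \<ge> 1" "a < m" using less.prems by (auto elim!: evenE)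
    moreover have "(2*a - 1) div 2 = a - 1" by presburger
    ultimately have "odd ((m - 1) choose ((m - 1) div 2)) \<longleftrightarrow> odd ((2*a - 1) choose (a - 1))"
      by simp
    also have "\<dots> \<longleftrightarrow> (\<exists>k. a = 2 ^ k)" using less.IH \<open>a < m\<close> \<open>a \<ge> 1\<close> by blast
    finally show ?thesis using a double_eq_power_of_two_iff by simp
  next
    case False
    then obtain a where a: "m = 2 * a + 1" by (auto elim!: oddE)
    show ?thesis
    proof (cases "a = 0")
      case True
      then show ?thesis using a by (auto intro: exI[of _ 0])
    next
      case False
      have "\<not> (\<exists>k. m = 2 ^ k)"
      proof
        assume "\<exists>k. m = 2 ^ k"
        then obtain k where "m = 2 ^ k" by blast
        then show False using a False by (cases k) (simp_all, presburger)
      qed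
      moreover have "even ((m - 1) choose ((m - 1) div 2))"
        using central_binomial_eq_double[of a] a False by simp
      ultimately show ?thesis by blast
    qed
  qed
  finally show ?case .
qed

lemma card_filter_split:
  "finite S \<Longrightarrow> card {a \<in> S. P a} = card {a \<in> S. P a \<and> Q a} + card {a \<in> S. P a \<and> \<not> Q a}"
  by (subst card_Un_disjoint[symmetric]) (auto intro: arg_cong[where f = card])

lemma sum_eq_imp_ex_less:
  fixes f g :: "'a \<Rightarrow> 'b :: {ordered_cancel_comm_monoid_add, linorder}"
  assumes "finite S" and "sum f S = sum g S" and "x \<in> S" and "f x \<noteq> g x"
  shows "\<exists>y \<in> S. f y < g y"
proof (rule ccontr)
  assume "\<not> ?thesis"
  then have "\<forall>y \<in> S. g y \<le> f y" and "g x < f x"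
    using assms(3,4) by (auto simp: not_less order_less_le)
  then have "sum g S < sum f S"
    using sum_strict_mono_ex1[OF assms(1)] assms(3) by blast
  then show False using assms(2) by simp
qed

lemma finite_msubsets: "finite X \<Longrightarrow> finite (msubsets X m)"
  by (rule finite_subset[of _ "Pow X"]) (auto simp: msubsets_def)

lemma card_msubsets: "finite X \<Longrightarrow> card (msubsets X m) = card X choose m"
  unfolding msubsets_def by (rule n_subsets)

lemma sum_card_containing:
  assumes "finite X" and "F \<subseteq> msubsets X m"
  shows "(\<Sum>x\<in>X. card {A \<in> F. x \<in> A}) = m * card F"
proof -
  have F: "finite F" using assms finite_msubsets finite_subset by blast
  have "(\<Sum>x\<in>X. card {A \<in> F. x \<in> A}) = (\<Sum>x\<in>X. \<Sum>A\<in>F. if x \<in> A then 1 else 0)"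
    using F by (simp add: sum.If_cases Int_def conj_commute)
  also have "\<dots> = (\<Sum>A\<in>F. \<Sum>x\<in>X. if x \<in> A then 1 else 0)"
    by (rule sum.swap)
  also have "\<dots> = (\<Sum>A\<in>F. m)"
  proof (rule sum.cong[OF refl])
    fix A assume "A \<in> F"
    then have "A \<subseteq> X" "card A = m" using assms(2) by (auto simp: msubsets_def)
    then show "(\<Sum>x\<in>X. if x \<in> A then 1 else 0) = m"
      using assms(1) by (simp add: sum.If_cases Int_absorb1)
  qed
  finally show ?thesis by simp
qed

lemma card_msubsets_containing_not_containing:
  assumes "finite X" and "x \<in> X" and "y \<in> X" and "x \<noteq> y" and "m \<ge> 1"
  shows "card {A \<in> msubsets X m. x \<in> A \<and> y \<notin> A} = (card X - 2) choose (m - 1)"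
proof -
  have "bij_betw (\<lambda>A. A - {x}) {A \<in> msubsets X m. x \<in> A \<and> y \<notin> A} (msubsets (X - {x, y}) (m - 1))"
  proof (rule bij_betw_byWitness[where f' = "insert x"])
    show "(\<lambda>A. A - {x}) ` {A \<in> msubsets X m. x \<in> A \<and> y \<notin> A} \<subseteq> msubsets (X - {x, y}) (m - 1)"
      using assms(1) by (auto simp: msubsets_def card_Diff_singleton dest: finite_subset)
    show "insert x ` msubsets (X - {x, y}) (m - 1) \<subseteq> {A \<in> msubsets X m. x \<in> A \<and> y \<notin> A}"
    proof
      fix B assume "B \<in> insert x ` msubsets (X - {x, y}) (m - 1)"
      then obtain S where S: "S \<subseteq> X - {x, y}" "card S = m - 1" "B = insert x S"
        by (auto simp: msubsets_def)
      moreover have "finite S" "x \<notin> S" using S(1) assms(1) finite_subset by blast+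
      ultimately show "B \<in> {A \<in> msubsets X m. x \<in> A \<and> y \<notin> A}"
        using assms by (auto simp: msubsets_def)
    qed
  qed (use assms in \<open>auto simp: msubsets_def\<close>)
  then show ?thesis
    using assms by (simp add: bij_betw_same_card card_msubsets card_Diff_subset numeral_2_eq_2)
qed

definition recolour :: "'a set set \<Rightarrow> ('a set \<Rightarrow> bool) \<Rightarrow> 'a set \<Rightarrow> bool" where
  "recolour F red A = (if A \<in> F then \<not> red A else red A)"

lemma complement_distinct_recolour:
  assumes "complement_distinct red X m" and "F \<subseteq> msubsets X m"
    and "\<And>A. A \<in> F \<Longrightarrow> X - A \<in> F"
  shows "complement_distinct (recolour F red) X m"
  unfolding complement_distinct_def
proof
  fix A assume A: "A \<in> msubsets X m"
  then have "A \<in> F \<longleftrightarrow> X - A \<in> F"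
    using assms(3)[of "X - A"] assms(3)[of A] by (auto simp: msubsets_def double_diff)
  then show "recolour F red A \<noteq> recolour F red (X - A)"
    using assms(1) A by (auto simp: recolour_def complement_distinct_def)
qed

lemma red_deg_recolour:
  assumes "finite X" and "F \<subseteq> msubsets X m"
  shows "int (red_deg (recolour F red) X m z) =
    int (red_deg red X m z) + (\<Sum>A\<in>F. if z \<in> A then (if red A then -1 else 1) else 0)"
proof -
  let ?ind = "\<lambda>r A. if r A \<and> z \<in> A then 1 else (0::int)"
  have count: "int (red_deg r X m z) = (\<Sum>A\<in>msubsets X m. ?ind r A)" for r
    using finite_msubsets[OF assms(1)] by (simp add: red_deg_def sum.If_cases Int_def)
  have "(\<Sum>A\<in>msubsets X m. ?ind (recolour F red) A - ?ind red A)
      = (\<Sum>A\<in>F. ?ind (recolour F red) A - ?ind red A)"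
    by (rule sum.mono_neutral_right[OF finite_msubsets[OF assms(1)] assms(2)]) (auto simp: recolour_def)
  also have "\<dots> = (\<Sum>A\<in>F. if z \<in> A then (if red A then -1 else 1) else 0)"
    by (rule sum.cong) (auto simp: recolour_def)
  finally show ?thesis
    unfolding count by (simp add: sum_subtractf)
qed

lemma swap_in_msubsets:
  assumes "finite X" and "A \<in> msubsets X m" and "x \<in> A" and "y \<in> X - A"
  shows "insert y (A - {x}) \<in> msubsets X m"
proof -
  have "A \<subseteq> X" "card A = m" using assms(2) by (auto simp: msubsets_def)
  moreover have "finite A" using \<open>A \<subseteq> X\<close> assms(1) finite_subset by blast
  moreover have "card A > 0" using \<open>finite A\<close> assms(3) card_gt_0_iff by blast
  ultimately show ?thesis using assms(3,4) by (auto simp: msubsets_def card_Diff_singleton)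
qed

lemma exists_red_set_swapping_to_blue:
  assumes "finite X" and "y \<in> X" and "x \<noteq> y"
    and "red_deg red X m y < red_deg red X m x"
  shows "\<exists>A \<in> msubsets X m. red A \<and> x \<in> A \<and> y \<notin> A \<and> \<not> red (insert y (A - {x}))"
proof (rule ccontr)
  have fin: "finite (msubsets X m)" using finite_msubsets[OF assms(1)] .
  let ?Rx = "{A \<in> msubsets X m. red A \<and> x \<in> A \<and> y \<notin> A}"
  let ?Ry = "{A \<in> msubsets X m. red A \<and> y \<in> A \<and> x \<notin> A}"
  let ?Rxy = "{A \<in> msubsets X m. red A \<and> x \<in> A \<and> y \<in> A}"
  assume "\<not> ?thesis"
  then have "(\<lambda>A. insert y (A - {x})) ` ?Rx \<subseteq> ?Ry"
    using swap_in_msubsets[OF assms(1)] assms(2,3) by auto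
  moreover have "inj_on (\<lambda>A. insert y (A - {x})) ?Rx"
    by (rule inj_on_inverseI[where g = "\<lambda>B. insert x (B - {y})"]) (use assms(3) in auto)
  ultimately have "card ?Rx \<le> card ?Ry"
    using fin by (intro card_inj_on_le) auto
  moreover have "red_deg red X m x = card ?Rxy + card ?Rx" "red_deg red X m y = card ?Rxy + card ?Ry"
    using card_filter_split[OF fin, of "\<lambda>A. red A \<and> x \<in> A" "\<lambda>A. y \<in> A"]
      card_filter_split[OF fin, of "\<lambda>A. red A \<and> y \<in> A" "\<lambda>A. x \<in> A"]
    by (simp_all add: red_deg_def conj_assoc conj_commute conj_left_commute)
  ultimately show False using assms(4) by linarith
qed

context
  fixes X :: "'a set" and m :: nat
  assumes finite_X: "finite X" and card_X: "card X = 2 * m"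
begin

lemma Diff_in_msubsets: "A \<in> msubsets X m \<Longrightarrow> X - A \<in> msubsets X m"
  using finite_X card_X by (auto simp: msubsets_def card_Diff_subset finite_subset)

lemma card_msubsets_filter_complement:
  "card {A \<in> msubsets X m. P (X - A)} = card {A \<in> msubsets X m. P A}"
proof (rule bij_betw_same_card, rule bij_betw_byWitness[where f = "\<lambda>A. X - A" and f' = "\<lambda>A. X - A"])
  show "(\<lambda>A. X - A) ` {A \<in> msubsets X m. P (X - A)} \<subseteq> {A \<in> msubsets X m. P A}"
    "(\<lambda>A. X - A) ` {A \<in> msubsets X m. P A} \<subseteq> {A \<in> msubsets X m. P (X - A)}"
    using Diff_in_msubsets by (auto simp: msubsets_def double_diff)
qed (auto simp: msubsets_def double_diff)

lemma card_red_sets: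
  assumes "complement_distinct red X m" and "m \<ge> 1"
  shows "card {A \<in> msubsets X m. red A} = (2*m - 1) choose (m - 1)"
proof -
  have "{A \<in> msubsets X m. \<not> red (X - A)} = {A \<in> msubsets X m. red A}"
    using assms(1) by (auto simp: complement_distinct_def)
  then have "card {A \<in> msubsets X m. \<not> red A} = card {A \<in> msubsets X m. red A}"
    using card_msubsets_filter_complement[of "\<lambda>A. \<not> red A"] by simp
  moreover have "card (msubsets X m) = card {A \<in> msubsets X m. red A} + card {A \<in> msubsets X m. \<not> red A}"
    using card_filter_split[OF finite_msubsets[OF finite_X, of m], of "\<lambda>_. True" red] by simp
  ultimately show ?thesis
    using card_msubsets[OF finite_X] card_X central_binomial_eq_double[OF assms(2)] by simp
qed

lemma red_deg_add_blue_deg: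
  assumes "complement_distinct red X m" and "m \<ge> 1" and "x \<in> X"
  shows "red_deg red X m x + blue_deg red X m x = (2*m - 1) choose (m - 1)"
proof -
  have "{A \<in> msubsets X m. \<not> red (X - A) \<and> x \<in> X - A} = {A \<in> msubsets X m. red A \<and> x \<notin> A}"
    using assms(1,3) by (auto simp: complement_distinct_def)
  then have "blue_deg red X m x = card {A \<in> msubsets X m. red A \<and> x \<notin> A}"
    using card_msubsets_filter_complement[of "\<lambda>A. \<not> red A \<and> x \<in> A"] by (simp add: blue_deg_def)
  then show ?thesis
    using card_filter_split[OF finite_msubsets[OF finite_X, of m], of red "\<lambda>A. x \<in> A"]
      card_red_sets[OF assms(1,2)] by (simp add: red_deg_def)
qed

lemma sum_red_deg:
  assumes "complement_distinct red X m" and "m \<ge> 1"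
  shows "(\<Sum>x\<in>X. red_deg red X m x) = m * ((2*m - 1) choose (m - 1))"
proof -
  have "red_deg red X m x = card {A \<in> {A \<in> msubsets X m. red A}. x \<in> A}" for x
    unfolding red_deg_def by (rule arg_cong[where f = card]) auto
  then show ?thesis
    using sum_card_containing[OF finite_X, of "{A \<in> msubsets X m. red A}" m] card_red_sets[OF assms]
    by simp
qed

lemma even_red_deg_add:
  assumes "complement_distinct red X m" and "m \<ge> 2" and "x \<in> X" and "y \<in> X"
  shows "even (red_deg red X m x + red_deg red X m y)"
proof (cases "x = y")
  case False
  let ?M = "msubsets X m"
  let ?Rxy = "{A \<in> ?M. red A \<and> x \<in> A \<and> y \<in> A}"
  let ?Rx = "{A \<in> ?M. red A \<and> x \<in> A \<and> y \<notin> A}"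
  let ?Bx = "{A \<in> ?M. \<not> red A \<and> x \<in> A \<and> y \<notin> A}"
  have fin: "finite ?M" using finite_msubsets[OF finite_X, of m] .
  have red_x: "red_deg red X m x = card ?Rxy + card ?Rx"
    using card_filter_split[OF fin, of "\<lambda>A. red A \<and> x \<in> A" "\<lambda>A. y \<in> A"]
    by (simp add: red_deg_def conj_assoc)
  have red_y: "red_deg red X m y = card ?Rxy + card ?Bx"
  proof -
    have "{A \<in> ?M. red (X - A) \<and> y \<in> X - A \<and> x \<notin> X - A} = ?Bx"
      using assms by (auto simp: complement_distinct_def)
    then have "card {A \<in> ?M. red A \<and> y \<in> A \<and> x \<notin> A} = card ?Bx"
      using card_msubsets_filter_complement[of "\<lambda>A. red A \<and> y \<in> A \<and> x \<notin> A"] by simp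
    then show ?thesis
      using card_filter_split[OF fin, of "\<lambda>A. red A \<and> y \<in> A" "\<lambda>A. x \<in> A"]
      by (simp add: red_deg_def conj_assoc conj_commute conj_left_commute)
  qed
  have "card {A \<in> ?M. x \<in> A \<and> y \<notin> A} = card ?Rx + card ?Bx"
    using card_filter_split[OF fin, of "\<lambda>A. x \<in> A \<and> y \<notin> A" red]
    by (simp add: conj_commute conj_left_commute)
  moreover have "card {A \<in> ?M. x \<in> A \<and> y \<notin> A} = (2 * (m - 1)) choose (m - 1)"
    using card_msubsets_containing_not_containing[OF finite_X assms(3,4) False, of m] assms(2) card_X
    by (simp add: right_diff_distrib')
  moreover have "even ((2 * (m - 1)) choose (m - 1))"
    using central_binomial_eq_double[of "m - 1"] assms(2) by simp
  ultimately show ?thesis using red_x red_y by simp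
qed simp

lemma exists_recolouring_shift:
  assumes cd: "complement_distinct red X m" and "m \<ge> 2" and x: "x \<in> X" and y: "y \<in> X"
    and less: "red_deg red X m y < red_deg red X m x"
  shows "\<exists>red'. complement_distinct red' X m \<and>
    red_deg red' X m x + 2 = red_deg red X m x \<and>
    red_deg red' X m y = red_deg red X m y + 2 \<and>
    (\<forall>z \<in> X - {x, y}. red_deg red' X m z = red_deg red X m z)"
proof -
  have "x \<noteq> y" using less by auto
  then obtain A where A: "A \<in> msubsets X m" "red A" "x \<in> A" "y \<notin> A"
    and blue_B: "\<not> red (insert y (A - {x}))"
    using exists_red_set_swapping_to_blue[OF finite_X y _ less] by blast
  define B where "B = insert y (A - {x})"
  have B: "B \<in> msubsets X m" unfolding B_def using swap_in_msubsets[OF finite_X A(1,3)] y A(4) by blast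
  have "card (A - {x}) = m - 1"
    using A finite_subset[OF _ finite_X] by (auto simp: msubsets_def)
  then have "A - {x} \<noteq> {}" using \<open>m \<ge> 2\<close> by (intro notI) simp
  \<comment> \<open>a second point of A keeps the four recoloured sets distinct; this is where m \<ge> 2 is needed\<close>
  then obtain w where w: "w \<in> A" "w \<noteq> x" by blast
  have colours: "\<not> red B" "\<not> red (X - A)" "red (X - B)"
    using blue_B cd A(1,2) B by (auto simp: B_def complement_distinct_def)
  define F where "F = {A, B, X - A, X - B}"
  have F: "F \<subseteq> msubsets X m" "\<And>C. C \<in> F \<Longrightarrow> X - C \<in> F"
    using A(1) B Diff_in_msubsets by (auto simp: F_def msubsets_def double_diff)
  let ?h = "\<lambda>z C. if z \<in> C then (if red C then -1 else 1) else (0::int)"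
  have "A \<noteq> B" "A \<noteq> X - A" "A \<noteq> X - B" "B \<noteq> X - A" "B \<noteq> X - B" "X - A \<noteq> X - B"
    using A(3,4) w x y \<open>x \<noteq> y\<close> by (auto simp: B_def)
  then have deg: "int (red_deg (recolour F red) X m z) =
      int (red_deg red X m z) + (?h z A + ?h z B + ?h z (X - A) + ?h z (X - B))" for z
    using red_deg_recolour[OF finite_X F(1), of red z] by (simp add: F_def add.assoc)
  have "x \<notin> B" "y \<in> B" "\<And>z. z \<notin> {x, y} \<Longrightarrow> z \<in> B \<longleftrightarrow> z \<in> A"
    using \<open>x \<noteq> y\<close> by (auto simp: B_def)
  note mem = this
  have "red_deg (recolour F red) X m x + 2 = red_deg red X m x"
    using deg[of x] mem A(2,3) colours x by simp
  moreover have "red_deg (recolour F red) X m y = red_deg red X m y + 2"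
    using deg[of y] mem A(2,4) colours y by simp
  moreover have "red_deg (recolour F red) X m z = red_deg red X m z" if "z \<in> X - {x, y}" for z
    using deg[of z] mem(3)[of z] A(2) colours that by auto
  ultimately show ?thesis
    using complement_distinct_recolour[OF cd F] by blast
qed

lemma exists_colouring_red_deg_parity:
  fixes t :: "'a \<Rightarrow> int"
  assumes "m \<ge> 2" and t_parity: "\<And>x y. x \<in> X \<Longrightarrow> y \<in> X \<Longrightarrow> even (t x - t y)"
  shows "\<exists>red. complement_distinct red X m \<and> (\<forall>x \<in> X. even (int (red_deg red X m x) - t x))"
proof -
  obtain A0 where A0: "A0 \<subseteq> X" "card A0 = m"
    using obtain_subset_with_card_n[of m X] card_X by auto
  with \<open>m \<ge> 2\<close> obtain x0 where x0: "x0 \<in> A0" by fastforce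
  then have "x0 \<in> X" using A0(1) by blast
  let ?red0 = "\<lambda>A. x0 \<in> A"
  have cd0: "complement_distinct ?red0 X m"
    using \<open>x0 \<in> X\<close> by (auto simp: complement_distinct_def)
  have "\<exists>red. complement_distinct red X m \<and> even (int (red_deg red X m x0) - t x0)"
  proof (cases "even (int (red_deg ?red0 X m x0) - t x0)")
    case False
    let ?F = "{A0, X - A0}"
    have F: "?F \<subseteq> msubsets X m" "\<And>A. A \<in> ?F \<Longrightarrow> X - A \<in> ?F"
      using A0 Diff_in_msubsets[of A0] by (auto simp: msubsets_def double_diff)
    have "A0 \<noteq> X - A0" using x0 by blast
    then have "int (red_deg (recolour ?F ?red0) X m x0) = int (red_deg ?red0 X m x0) - 1"
      using red_deg_recolour[OF finite_X F(1), of ?red0 x0] x0 by simp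
    then show ?thesis
      using False complement_distinct_recolour[OF cd0 F] by (intro exI[of _ "recolour ?F ?red0"]) simp
  qed (use cd0 in blast)
  then obtain red where cd: "complement_distinct red X m" and x0_parity: "even (int (red_deg red X m x0) - t x0)"
    by blast
  have "even (int (red_deg red X m x) - t x)" if "x \<in> X" for x
  proof -
    have "even (int (red_deg red X m x) + int (red_deg red X m x0))"
      using even_red_deg_add[OF cd \<open>m \<ge> 2\<close> that \<open>x0 \<in> X\<close>] by (simp flip: of_nat_add)
    then show ?thesis
      using t_parity[OF that \<open>x0 \<in> X\<close>] x0_parity by presburger
  qed
  with cd show ?thesis by blast
qed

lemma exists_colouring_closer:
  fixes t :: "'a \<Rightarrow> int"
  assumes cd: "complement_distinct red X m" and "m \<ge> 2"
    and parity: "\<forall>x \<in> X. even (int (red_deg red X m x) - t x)"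
    and spread: "\<And>x y. x \<in> X \<Longrightarrow> y \<in> X \<Longrightarrow> t y \<le> t x + 2"
    and total: "(\<Sum>x\<in>X. t x) = int (m * ((2*m - 1) choose (m - 1)))"
    and "x0 \<in> X" and "int (red_deg red X m x0) \<noteq> t x0"
  shows "\<exists>red'. complement_distinct red' X m \<and> (\<forall>x \<in> X. even (int (red_deg red' X m x) - t x)) \<and>
    (\<Sum>x\<in>X. nat \<bar>int (red_deg red' X m x) - t x\<bar>) < (\<Sum>x\<in>X. nat \<bar>int (red_deg red X m x) - t x\<bar>)"
proof -
  let ?r = "\<lambda>x. int (red_deg red X m x)"
  have sums: "(\<Sum>x\<in>X. ?r x) = (\<Sum>x\<in>X. t x)"
    using sum_red_deg[OF cd] \<open>m \<ge> 2\<close> total by (simp flip: of_nat_sum)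
  obtain x where x: "x \<in> X" "t x < ?r x"
    using sum_eq_imp_ex_less[OF finite_X sums[symmetric] \<open>x0 \<in> X\<close>] assms(7) by auto
  obtain y where y: "y \<in> X" "?r y < t y"
    using sum_eq_imp_ex_less[OF finite_X sums \<open>x0 \<in> X\<close> assms(7)] by auto
  have "even (?r x - t x)" "even (?r y - t y)"
    using parity x(1) y(1) by blast+
  then have gap_x: "t x + 2 \<le> ?r x" and gap_y: "?r y + 2 \<le> t y"
    using x(2) y(2) by presburger+
  then have "red_deg red X m y < red_deg red X m x"
    using spread[OF x(1) y(1)] by linarith
  then obtain red' where cd': "complement_distinct red' X m"
    and red'_x: "red_deg red' X m x + 2 = red_deg red X m x"
    and red'_y: "red_deg red' X m y = red_deg red X m y + 2"
    and red'_z: "\<forall>z \<in> X - {x, y}. red_deg red' X m z = red_deg red X m z"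
    using exists_recolouring_shift[OF cd \<open>m \<ge> 2\<close> x(1) y(1)] by blast
  let ?r' = "\<lambda>x. int (red_deg red' X m x)"
  have "?r' x = ?r x - 2" "?r' y = ?r y + 2" "\<And>z. z \<in> X - {x, y} \<Longrightarrow> ?r' z = ?r z"
    using red'_x red'_y red'_z by auto
  then have step: "even (?r' z - t z) \<and> nat \<bar>?r' z - t z\<bar> \<le> nat \<bar>?r z - t z\<bar>" if "z \<in> X" for z
    using that parity gap_x gap_y by (cases "z = x"; cases "z = y") auto
  have "nat \<bar>?r' x - t x\<bar> < nat \<bar>?r x - t x\<bar>"
    using \<open>?r' x = ?r x - 2\<close> gap_x by simp
  then have "(\<Sum>z\<in>X. nat \<bar>?r' z - t z\<bar>) < (\<Sum>z\<in>X. nat \<bar>?r z - t z\<bar>)"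
    using sum_strict_mono_ex1[OF finite_X, of "\<lambda>z. nat \<bar>?r' z - t z\<bar>" "\<lambda>z. nat \<bar>?r z - t z\<bar>"]
      step x(1)
    by blast
  with cd' step show ?thesis by blast
qed

lemma exists_colouring_with_red_deg:
  fixes t :: "'a \<Rightarrow> int"
  assumes "m \<ge> 2"
    and spread: "\<And>x y. x \<in> X \<Longrightarrow> y \<in> X \<Longrightarrow> t y \<le> t x + 2"
    and t_parity: "\<And>x y. x \<in> X \<Longrightarrow> y \<in> X \<Longrightarrow> even (t x - t y)"
    and total: "(\<Sum>x\<in>X. t x) = int (m * ((2*m - 1) choose (m - 1)))"
  shows "\<exists>red. complement_distinct red X m \<and> (\<forall>x \<in> X. int (red_deg red X m x) = t x)"
proof -
  let ?good = "\<lambda>red. complement_distinct red X m \<and> (\<forall>x \<in> X. even (int (red_deg red X m x) - t x))"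
  let ?dev = "\<lambda>red. \<Sum>x\<in>X. nat \<bar>int (red_deg red X m x) - t x\<bar>"
  obtain red0 where "?good red0"
    using exists_colouring_red_deg_parity[where t = t, OF \<open>m \<ge> 2\<close> t_parity] by blast
  then obtain red where good: "?good red" and least: "\<And>red'. ?good red' \<Longrightarrow> ?dev red \<le> ?dev red'"
    using ex_has_least_nat[of ?good red0 ?dev] by blast
  have "\<forall>x \<in> X. int (red_deg red X m x) = t x"
  proof (rule ccontr)
    assume "\<not> ?thesis"
    then obtain x0 where "x0 \<in> X" "int (red_deg red X m x0) \<noteq> t x0" by blast
    then obtain red' where "?good red'" "?dev red' < ?dev red"
      using good exists_colouring_closer[where t = t, OF _ \<open>m \<ge> 2\<close> _ spread total] by blast
    then show False using least[of red'] by linarith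
  qed
  with good show ?thesis by blast
qed

lemma exists_balanced_colouring:
  assumes "m \<ge> 2" and "even ((2*m - 1) choose (m - 1))"
  shows "\<exists>red. complement_distinct red X m \<and> (\<forall>x \<in> X. red_deg red X m x = blue_deg red X m x)"
proof -
  obtain q where q: "(2*m - 1) choose (m - 1) = 2 * q" using assms(2) by blast
  have "(\<Sum>x\<in>X. int q) = int (m * ((2*m - 1) choose (m - 1)))"
    using card_X q by simp
  then obtain red where cd: "complement_distinct red X m" and red: "\<forall>x \<in> X. int (red_deg red X m x) = int q"
    using exists_colouring_with_red_deg[of "\<lambda>_. int q"] assms(1) by auto
  have "red_deg red X m x = blue_deg red X m x" if "x \<in> X" for x
    using red_deg_add_blue_deg[OF cd _ that] red that q assms(1) by simp
  with cd show ?thesis by blast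
qed

lemma exists_near_balanced_colouring:
  assumes "m \<ge> 2" and "even m" and "odd ((2*m - 1) choose (m - 1))"
  shows "\<exists>red P. complement_distinct red X m \<and> P \<subseteq> X \<and> card P = m div 2 \<and>
    (\<forall>x \<in> P. int (red_deg red X m x) = int (blue_deg red X m x) + 3) \<and>
    (\<forall>x \<in> X - P. int (blue_deg red X m x) = int (red_deg red X m x) + 1)"
proof -
  obtain q where q: "(2*m - 1) choose (m - 1) = 2 * q + 1" using assms(3) oddE by blast
  have "m div 2 \<le> card X" using card_X by simp
  then obtain P where P: "P \<subseteq> X" "card P = m div 2"
    by (rule obtain_subset_with_card_n)
  define t where "t x = int q + (if x \<in> P then 2 else 0)" for x
  have "(\<Sum>x\<in>X. t x) = int (card X) * int q + 2 * int (card P)"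
    using P(1) finite_X by (simp add: t_def sum.distrib sum.If_cases Int_absorb1)
  also have "\<dots> = int (m * ((2*m - 1) choose (m - 1)))"
    using card_X P(2) q assms(2) by (auto elim!: evenE simp: algebra_simps)
  finally have total: "(\<Sum>x\<in>X. t x) = int (m * ((2*m - 1) choose (m - 1)))" .
  have "t y \<le> t x + 2" "even (t x - t y)" for x y
    by (simp_all add: t_def)
  then obtain red where cd: "complement_distinct red X m" and red: "\<forall>x \<in> X. int (red_deg red X m x) = t x"
    using exists_colouring_with_red_deg[where t = t, OF assms(1) _ _ total] by blast
  have blue: "int (blue_deg red X m x) = 2 * int q + 1 - t x" if "x \<in> X" for x
  proof -
    have "int (red_deg red X m x) + int (blue_deg red X m x) = 2 * int q + 1"
      using red_deg_add_blue_deg[OF cd _ that] q assms(1) by (simp flip: of_nat_add)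
    then show ?thesis using red that by simp
  qed
  have "int (red_deg red X m x) = int (blue_deg red X m x) + 3" if "x \<in> P" for x
    using blue[of x] red P(1) that by (auto simp: t_def)
  moreover have "int (blue_deg red X m x) = int (red_deg red X m x) + 1" if "x \<in> X - P" for x
    using blue[of x] red that by (auto simp: t_def)
  ultimately show ?thesis
    using cd P by blast
qed

end

theorem theorem1p5:
  fixes X :: "'a set" and m :: nat
  assumes "m \<ge> 2" and "finite X" and "card X = 2 * m"
  shows "(\<not> (\<exists>k. m = 2 ^ k) \<longrightarrow>
           (\<exists>red. complement_distinct red X m \<and>
              (\<forall>x \<in> X. red_deg red X m x = blue_deg red X m x)))
       \<and> ((\<exists>k. m = 2 ^ k) \<longrightarrow>
           (\<exists>red P. complement_distinct red X m \<and> P \<subseteq> X \<and> card P = m div 2 \<and>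
              (\<forall>x \<in> P. int (red_deg red X m x) = int (blue_deg red X m x) + 3) \<and>
              (\<forall>x \<in> X - P. int (blue_deg red X m x) = int (red_deg red X m x) + 1)))"
proof -
  have parity: "odd ((2*m - 1) choose (m - 1)) \<longleftrightarrow> (\<exists>k. m = 2 ^ k)"
    using odd_choose_double_pred_iff assms(1) by simp
  have "even m" if "m = 2 ^ k" for k
    using that assms(1) by (cases k) auto
  then show ?thesis
    using exists_balanced_colouring[OF assms(2,3,1)] exists_near_balanced_colouring[OF assms(2,3,1)] parity
    by blast
qed

end
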